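(* (Quotient rule.) Let $n\in\mathbb{N}$ (with $0\in\mathbb{N}$) and let $u$ and $v$ be $n$ times differentiable functions of $x$. At every point where $v\neq 0$, \[ \frac{d^n}{dx^n}\left(\frac{u}{v}\right)=n!\sum_{\ell=0}^{n}\frac{u^{(n-\ell)}}{(n-\ell)!}\sum_{\sum_i i y_{k,i}=\ell}\binom{\sum_i y_{k,i}}{y_{k,1},\ldots,y_{k,\ell}}\frac{(-1)^{\sum_i y_{k,i}}}{v^{\sum_i y_{k,i}+1}}\prod_{i=1}^{\ell}\left[\frac{v^{(i)}}{i!}\right]^{y_{k,i}}. \]
   Context: For each $\ell$, the inner sum runs over all partitions of $\ell$, each represented as a tuple $(y_{k,1},\ldots,y_{k,\ell})$ of non-negative integers with $\sum_{i=1}^{\ell} i\,y_{k,i}=\ell$; sums $\sum_i$ run over $i=1,\ldots,\ell$. For $\ell=0$ the only partition is the zero partition and the inner sum equals $1/v$. $f^{(i)}$ denotes the $i$-th derivative with respect to $x$, and $\binom{N}{a_1,\ldots,a_m}=\frac{N!}{a_1!\cdots a_m!}$ is the multinomial coefficient. *)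

theory Defs
  imports "HOL-Analysis.Analysis"
begin

text \<open>Partitions of l, as multiplicity tuples (y_1,...,y_l) with sum_i i*y_i = l;
  entries outside {1..l} are forced to be 0.\<close>
definition partitions_tuples :: "nat \<Rightarrow> (nat \<Rightarrow> nat) set" where
  "partitions_tuples l = {y. (\<forall>i. i \<notin> {1..l} \<longrightarrow> y i = 0) \<and> (\<Sum>i=1..l. i * y i) = l}"

definition multinomial_coeff :: "nat \<Rightarrow> (nat \<Rightarrow> nat) \<Rightarrow> nat \<Rightarrow> real" where
  "multinomial_coeff N a m = fact N / (\<Prod>i=1..m. fact (a i))"

end

theory Submission
  imports Defs "HOL-Combinatorics.Multiset_Permutations" "HOL-Complex_Analysis.Cauchy_Integral_Formula"
begin

text \<open>Put a_i = v^(i)(x) / i! and q_i = (1/v)^(i)(x) / i!. Leibniz's rule for the product (1/v) u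
  reduces the theorem to a formula for q_l, and for the product v (1/v) = 1 it shows that
  a_0 q_l + ... + a_l q_0 is 1 for l = 0 and 0 otherwise. This recursion determines q, and it is
  also satisfied by the coefficients of the formal reciprocal of the series a_0 + a_1 t + ...,
  which the geometric series expresses as a sum over compositions of l. Grouping compositions by
  the multiplicities of their parts gives the sum over partitions: the number of compositions with
  prescribed multiplicities is the multinomial coefficient.\<close>

definition higher_differentiable_on :: "nat \<Rightarrow> (real \<Rightarrow> real) \<Rightarrow> real set \<Rightarrow> bool" where
  "higher_differentiable_on n f T \<longleftrightarrow> (\<forall>k<n. \<forall>y\<in>T. (deriv ^^ k) f differentiable (at y))"

lemma higher_differentiable_on_mono:
  "higher_differentiable_on n f T \<Longrightarrow> m \<le> n \<Longrightarrow> higher_differentiable_on m f T"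
  by (simp add: higher_differentiable_on_def)

lemma higher_differentiable_on_Suc:
  "higher_differentiable_on (Suc n) f T \<longleftrightarrow>
     (\<forall>y\<in>T. f differentiable (at y)) \<and> higher_differentiable_on n (deriv f) T"
  by (auto simp: higher_differentiable_on_def less_Suc_eq_0_disj funpow_Suc_right simp del: funpow.simps)

lemma higher_differentiable_on_const: "higher_differentiable_on n (\<lambda>_. c) T"
  by (simp add: higher_differentiable_on_def)

lemma higher_differentiable_on_has_field_derivative:
  assumes "higher_differentiable_on n f T" "k < n" "y \<in> T"
  shows "((deriv ^^ k) f has_field_derivative (deriv ^^ Suc k) f y) (at y)"
  using assms by (simp add: higher_differentiable_on_def DERIV_deriv_iff_real_differentiable)

lemma higher_deriv_cong_open:
  assumes "open T" "\<And>z. z \<in> T \<Longrightarrow> f z = g z" "y \<in> T"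
  shows "(deriv ^^ k) f y = (deriv ^^ k) g y"
  using assms by (intro higher_deriv_cong_ev refl) (auto elim: eventually_mono[OF eventually_nhds_in_open])

lemma differentiable_at_cong_open:
  fixes f g :: "real \<Rightarrow> real"
  assumes "open T" "\<And>z. z \<in> T \<Longrightarrow> f z = g z" "y \<in> T"
  shows "f differentiable (at y) \<longleftrightarrow> g differentiable (at y)"
proof -
  have "eventually (\<lambda>z. f z = g z) (nhds y)"
    using assms by (auto elim: eventually_mono[OF eventually_nhds_in_open])
  then show ?thesis
    unfolding real_differentiable_def by (metis DERIV_cong_ev)
qed

lemma higher_differentiable_on_cong:
  assumes "open T" "\<And>z. z \<in> T \<Longrightarrow> f z = g z"
  shows "higher_differentiable_on n f T \<longleftrightarrow> higher_differentiable_on n g T"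
proof -
  have "(deriv ^^ k) f differentiable (at y) \<longleftrightarrow> (deriv ^^ k) g differentiable (at y)" if "y \<in> T" for k y
    using assms that by (intro differentiable_at_cong_open[OF assms(1) _ that] higher_deriv_cong_open)
  then show ?thesis by (simp add: higher_differentiable_on_def)
qed

lemma binomial_convolution_Suc:
  fixes a b :: "nat \<Rightarrow> 'a::comm_semiring_1"
  shows "(\<Sum>i=0..k. of_nat (k choose i) * (a (Suc i) * b (k - i) + a i * b (Suc (k - i)))) =
         (\<Sum>i=0..Suc k. of_nat (Suc k choose i) * a i * b (Suc k - i))"
proof -
  have Pascal: "(\<Sum>i=0..Suc k. of_nat (Suc k choose i) * a i * b (Suc k - i)) =
        a 0 * b (Suc k) + (\<Sum>i=0..k. of_nat (k choose i) * a (Suc i) * b (k - i))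
          + (\<Sum>i=0..k. of_nat (k choose Suc i) * a (Suc i) * b (k - i))"
    by (simp add: sum.atLeast0_atMost_Suc_shift sum.distrib algebra_simps del: sum.cl_ivl_Suc)
  have "(\<Sum>i=0..k. of_nat (k choose i) * a i * b (Suc (k - i))) =
        (\<Sum>i=0..Suc k. of_nat (k choose i) * a i * b (Suc k - i))"
    by (auto simp: Suc_diff_le binomial_eq_0 intro: sum.cong)
  also have "\<dots> = a 0 * b (Suc k) + (\<Sum>i=0..k. of_nat (k choose Suc i) * a (Suc i) * b (k - i))"
    by (simp add: sum.atLeast0_atMost_Suc_shift del: sum.cl_ivl_Suc)
  finally show ?thesis
    using Pascal by (simp add: sum.distrib algebra_simps)
qed

lemma higher_deriv_mult_real:
  fixes f g :: "real \<Rightarrow> real"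
  assumes T: "open T" and f: "higher_differentiable_on n f T" and g: "higher_differentiable_on n g T"
    and "k \<le> n" "y \<in> T"
  shows "(deriv ^^ k) (\<lambda>w. f w * g w) y =
    (\<Sum>i=0..k. of_nat (k choose i) * (deriv ^^ i) f y * (deriv ^^ (k - i)) g y)"
  using assms(4,5)
proof (induction k arbitrary: y)
  case 0
  then show ?case by simp
next
  case (Suc k)
  define P where "P z = (\<Sum>i=0..k. of_nat (k choose i) * ((deriv ^^ i) f z * (deriv ^^ (k - i)) g z))"
    for z
  have "(deriv ^^ k) (\<lambda>w. f w * g w) z = P z" if "z \<in> T" for z
    using Suc that by (simp add: P_def mult.assoc)
  from higher_deriv_cong_open[OF T this Suc.prems(2), where k=1]
  have "(deriv ^^ Suc k) (\<lambda>w. f w * g w) y = deriv P y"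
    by simp
  also have "\<dots> = (\<Sum>i=0..k. of_nat (k choose i) *
      ((deriv ^^ Suc i) f y * (deriv ^^ (k - i)) g y + (deriv ^^ i) f y * (deriv ^^ Suc (k - i)) g y))"
    unfolding P_def using Suc.prems
    by (auto intro!: DERIV_imp_deriv DERIV_sum DERIV_cmult DERIV_mult[THEN DERIV_cong]
        higher_differentiable_on_has_field_derivative[OF f] higher_differentiable_on_has_field_derivative[OF g])
  also have "\<dots> = (\<Sum>i=0..Suc k. of_nat (Suc k choose i) * (deriv ^^ i) f y * (deriv ^^ (Suc k - i)) g y)"
    by (rule binomial_convolution_Suc)
  finally show ?case .
qed

lemma higher_deriv_mult_real_fact:
  fixes f g :: "real \<Rightarrow> real"
  assumes "open T" "higher_differentiable_on n f T" "higher_differentiable_on n g T" "k \<le> n" "y \<in> T"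
  shows "(deriv ^^ k) (\<lambda>w. f w * g w) y / fact k =
    (\<Sum>i=0..k. (deriv ^^ i) f y / fact i * ((deriv ^^ (k - i)) g y / fact (k - i)))"
  unfolding higher_deriv_mult_real[OF assms] sum_divide_distrib
  by (intro sum.cong refl) (simp add: binomial_fact field_simps)

lemma higher_differentiable_on_mult:
  fixes f g :: "real \<Rightarrow> real"
  assumes T: "open T" and f: "higher_differentiable_on n f T" and g: "higher_differentiable_on n g T"
  shows "higher_differentiable_on n (\<lambda>w. f w * g w) T"
  unfolding higher_differentiable_on_def
proof (intro allI impI ballI)
  fix k y assume k: "k < n" and y: "y \<in> T"
  have "(\<lambda>z. \<Sum>i=0..k. of_nat (k choose i) * (deriv ^^ i) f z * (deriv ^^ (k - i)) g z)
      differentiable (at y)"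
    using f g k y by (intro differentiable_sum differentiable_mult differentiable_const ballI)
      (auto simp: higher_differentiable_on_def)
  then show "(deriv ^^ k) (\<lambda>w. f w * g w) differentiable (at y)"
    using differentiable_at_cong_open[OF T higher_deriv_mult_real[OF T f g] y] k by simp
qed

lemma higher_differentiable_on_reciprocal:
  fixes v :: "real \<Rightarrow> real"
  assumes T: "open T" and nz: "\<And>z. z \<in> T \<Longrightarrow> v z \<noteq> 0" and v: "higher_differentiable_on n v T"
  shows "higher_differentiable_on n (\<lambda>t. 1 / v t) T"
  using v
proof (induction n)
  case 0
  then show ?case by (simp add: higher_differentiable_on_def)
next
  case (Suc n)
  have v_diff: "\<forall>z\<in>T. v differentiable (at z)" and v': "higher_differentiable_on n (deriv v) T"
    using Suc.prems by (simp_all add: higher_differentiable_on_Suc)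
  have w: "higher_differentiable_on n (\<lambda>t. 1 / v t) T"
    by (rule Suc.IH, rule higher_differentiable_on_mono[OF Suc.prems]) simp
  \<comment> \<open>the sign is kept as a constant factor \<open>-1\<close>, so closure under products suffices\<close>
  define r where "r z = -1 * (deriv v z * (1 / v z * (1 / v z)))" for z
  have "deriv (\<lambda>t. 1 / v t) z = r z" if "z \<in> T" for z
    using v_diff nz that unfolding r_def
    by (intro DERIV_imp_deriv) (auto intro!: derivative_eq_intros
        simp: DERIV_deriv_iff_real_differentiable power2_eq_square field_simps)
  moreover have "higher_differentiable_on n r T"
    unfolding r_def using T
    by (intro higher_differentiable_on_mult higher_differentiable_on_const v' w)
  ultimately have "higher_differentiable_on n (deriv (\<lambda>t. 1 / v t)) T"
    using higher_differentiable_on_cong[OF T] by blast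
  moreover have "\<forall>z\<in>T. (\<lambda>t. 1 / v t) differentiable (at z)"
    using v_diff nz by (auto intro: differentiable_divide)
  ultimately show ?case by (simp add: higher_differentiable_on_Suc)
qed

definition compositions :: "nat \<Rightarrow> nat list set" where
  "compositions l = {cs. 0 \<notin> set cs \<and> sum_list cs = l}"

text \<open>The coefficient of t^l in 1 / (a_0 + a_1 t + ...): writing the series as a_0 (1 + h) and
  expanding 1 / (1 + h) = \<Sum>k. (-h)^k, a composition (c_1, ..., c_k) of l records which
  term a_c t^c is taken from each of the k factors of h^k.\<close>
definition reciprocal_coeff :: "(nat \<Rightarrow> 'a::field) \<Rightarrow> nat \<Rightarrow> 'a" where
  "reciprocal_coeff a l =
    (\<Sum>cs\<in>compositions l. (-1) ^ length cs / a 0 ^ (length cs + 1) * prod_list (map a cs))"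

lemma set_compositions:
  assumes "cs \<in> compositions l"
  shows "set cs \<subseteq> {1..l}"
proof
  fix x assume "x \<in> set cs"
  with assms show "x \<in> {1..l}"
    using member_le_sum_list[of x cs] by (cases x) (auto simp: compositions_def)
qed

lemma finite_compositions: "finite (compositions l)"
proof (rule finite_subset)
  have "length cs \<le> sum_list cs" if "0 \<notin> set cs" for cs :: "nat list"
    using that by (induction cs) (auto simp: Suc_le_eq)
  then show "compositions l \<subseteq> {cs. set cs \<subseteq> {1..l} \<and> length cs \<le> l}"
    using set_compositions by (auto simp: compositions_def)
  show "finite {cs. set cs \<subseteq> {1..l} \<and> length cs \<le> l}"
    by (rule finite_lists_length_le) simp
qed

lemma compositions_0: "compositions 0 = {[]}"
  unfolding compositions_def by (auto simp: sum_list_eq_0_iff) (metis hd_in_set)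

lemma compositions_unfold:
  assumes "l \<ge> 1"
  shows "compositions l = (\<Union>j\<in>{1..l}. (#) j ` compositions (l - j))"
proof (intro equalityI subsetI)
  fix cs assume cs: "cs \<in> compositions l"
  then obtain j cs' where cs_eq: "cs = j # cs'"
    using assms by (cases cs) (auto simp: compositions_def)
  with cs have "j \<in> {1..l}" "cs' \<in> compositions (l - j)"
    using set_compositions[OF cs] by (auto simp: compositions_def)
  with cs_eq show "cs \<in> (\<Union>j\<in>{1..l}. (#) j ` compositions (l - j))"
    by blast
qed (auto simp: compositions_def)

lemma reciprocal_coeff_convolution:
  fixes a :: "nat \<Rightarrow> 'a::field"
  assumes a0: "a 0 \<noteq> 0"
  shows "(\<Sum>i=0..l. a i * reciprocal_coeff a (l - i)) = (if l = 0 then 1 else 0)"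
proof (cases "l = 0")
  case True
  then show ?thesis using a0 by (simp add: reciprocal_coeff_def compositions_0)
next
  case False
  let ?t = "\<lambda>cs. (-1) ^ length cs / a 0 ^ (length cs + 1) * prod_list (map a cs)"
  have "reciprocal_coeff a l = sum ?t (\<Union>j\<in>{1..l}. (#) j ` compositions (l - j))"
    using False by (simp add: reciprocal_coeff_def compositions_unfold)
  also have "\<dots> = (\<Sum>j=1..l. sum ?t ((#) j ` compositions (l - j)))"
    by (rule sum.UNION_disjoint) (auto simp: finite_compositions)
  also have "\<dots> = (\<Sum>j=1..l. \<Sum>cs\<in>compositions (l - j). - (a j / a 0) * ?t cs)"
    using a0 by (intro sum.cong[OF refl]) (auto simp: sum.reindex inj_on_def field_simps intro!: sum.cong)
  also have "\<dots> = - (\<Sum>j=1..l. a j * reciprocal_coeff a (l - j)) / a 0"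
    by (simp add: reciprocal_coeff_def sum_distrib_left sum_divide_distrib sum_negf mult_ac)
  finally have "a 0 * reciprocal_coeff a l + (\<Sum>j=1..l. a j * reciprocal_coeff a (l - j)) = 0"
    using a0 by (simp add: field_simps)
  moreover have "(\<Sum>i=0..l. a i * reciprocal_coeff a (l - i)) =
      a 0 * reciprocal_coeff a l + (\<Sum>i=1..l. a i * reciprocal_coeff a (l - i))"
    by (simp add: sum.atLeast_Suc_atMost)
  ultimately show ?thesis
    using False by simp
qed

lemma reciprocal_coeff_unique:
  fixes a q :: "nat \<Rightarrow> 'a::field"
  assumes a0: "a 0 \<noteq> 0"
    and q: "\<And>j. j \<le> l \<Longrightarrow> (\<Sum>i=0..j. a i * q (j - i)) = (if j = 0 then 1 else 0)"
  shows "q l = reciprocal_coeff a l"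
  using q
proof (induction l rule: less_induct)
  case (less l)
  have "(\<Sum>i=1..l. a i * q (l - i)) = (\<Sum>i=1..l. a i * reciprocal_coeff a (l - i))"
    using less by (intro sum.cong refl) auto
  moreover have "(\<Sum>i=0..l. a i * q (l - i)) = (\<Sum>i=0..l. a i * reciprocal_coeff a (l - i))"
    using less.prems[of l] reciprocal_coeff_convolution[of a l, OF a0] by simp
  ultimately have "a 0 * q l = a 0 * reciprocal_coeff a l"
    by (simp add: sum.atLeast_Suc_atMost)
  then show ?case using a0 by simp
qed

lemma prod_list_map_eq_prod_count:
  fixes a :: "'b \<Rightarrow> 'a::comm_monoid_mult"
  assumes "set cs \<subseteq> A" "finite A"
  shows "prod_list (map a cs) = (\<Prod>i\<in>A. a i ^ count_list cs i)"
  using assms(1)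
proof (induction cs)
  case (Cons c cs)
  have "(\<Prod>i\<in>A. a i ^ count_list (c # cs) i) =
      (\<Prod>i\<in>A. (if i = c then a i else 1) * a i ^ count_list cs i)"
    by (intro prod.cong) auto
  also have "\<dots> = a c * (\<Prod>i\<in>A. a i ^ count_list cs i)"
    using Cons.prems assms(2) by (simp add: prod.distrib prod.delta)
  finally show ?case using Cons by simp
qed simp

lemma finite_partitions_tuples: "finite (partitions_tuples l)"
proof (rule finite_subset)
  let ?F = "{y. \<forall>i. (i \<in> {1..l} \<longrightarrow> y i \<in> {0..l}) \<and> (i \<notin> {1..l} \<longrightarrow> y i = (0::nat))}"
  show "partitions_tuples l \<subseteq> ?F"
  proof safe
    fix y i assume y: "y \<in> partitions_tuples l" and i: "i \<in> {1..l}"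
    have "y i \<le> i * y i" using i by simp
    also have "\<dots> \<le> (\<Sum>j=1..l. j * y j)" using i by (intro member_le_sum) auto
    finally show "y i \<in> {0..l}" using y by (simp add: partitions_tuples_def)
  qed (auto simp: partitions_tuples_def)
  show "finite ?F"
    by (rule finite_set_of_finite_funs) auto
qed

lemma count_list_compositions:
  assumes "cs \<in> compositions l"
  shows "count_list cs \<in> partitions_tuples l"
proof -
  have cs: "set cs \<subseteq> {1..l}" "sum_list cs = l"
    using assms set_compositions by (auto simp: compositions_def)
  then have "(\<Sum>i=1..l. i * count_list cs i) = l"
    using sum_list_map_eq_sum_count2[OF cs(1), of id] by (simp add: mult.commute)
  moreover have "count_list cs i = 0" if "i \<notin> {1..l}" for i
    using cs(1) that by (auto simp: count_list_0_iff)
  ultimately show ?thesis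
    by (simp add: partitions_tuples_def)
qed

lemma count_Abs_multiset_partitions_tuples:
  "y \<in> partitions_tuples l \<Longrightarrow> count (Abs_multiset y) = y"
  by (rule count_Abs_multiset, rule finite_subset[of _ "{1..l}"]) (auto simp: partitions_tuples_def)

lemma compositions_with_count_list:
  assumes y: "y \<in> partitions_tuples l"
  shows "{cs \<in> compositions l. count_list cs = y} = permutations_of_multiset (Abs_multiset y)"
proof -
  have "cs \<in> compositions l" if cs: "count_list cs = y" for cs
  proof -
    have set_cs: "set cs \<subseteq> {1..l}"
    proof
      fix i assume "i \<in> set cs"
      then have "y i \<noteq> 0" using cs count_list_0_iff by metis
      then show "i \<in> {1..l}" using y by (auto simp: partitions_tuples_def)
    qed
    have "sum_list cs = (\<Sum>i=1..l. i * y i)"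
      using sum_list_map_eq_sum_count2[OF set_cs, of id] cs by (simp add: mult.commute)
    then show ?thesis
      using y cs set_cs by (auto simp: compositions_def partitions_tuples_def)
  qed
  moreover have "mset cs = Abs_multiset y \<longleftrightarrow> count_list cs = y" for cs
    by (auto simp: multiset_eq_iff count_mset count_Abs_multiset_partitions_tuples[OF y])
  ultimately show ?thesis
    by (auto simp: permutations_of_multiset_def)
qed

lemma card_compositions_with_count_list:
  assumes y: "y \<in> partitions_tuples l"
  shows "real (card {cs \<in> compositions l. count_list cs = y}) = multinomial_coeff (\<Sum>i=1..l. y i) y l"
proof -
  let ?A = "Abs_multiset y"
  obtain cs where cs: "mset cs = ?A"
    using ex_mset by blast
  then have cs_in: "cs \<in> compositions l" "count_list cs = y"
    using compositions_with_count_list[OF y] by (auto simp: permutations_of_multiset_def)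
  have set_cs: "set cs \<subseteq> {1..l}"
    using set_compositions[OF cs_in(1)] .
  have size_A: "size ?A = (\<Sum>i=1..l. y i)"
    unfolding cs[symmetric] using sum_count_set[OF set_cs] cs_in(2) by simp
  have "(\<Prod>x\<in>set_mset ?A. fact (count ?A x)) = (\<Prod>i\<in>set cs. fact (y i) :: nat)"
    unfolding cs[symmetric] using cs_in(2) by (simp add: count_mset)
  also have "\<dots> = (\<Prod>i=1..l. fact (y i))"
    using set_cs unfolding cs_in(2)[symmetric] by (intro prod.mono_neutral_left) auto
  finally have "card (permutations_of_multiset ?A) * (\<Prod>i=1..l. fact (y i) :: nat) =
      fact (\<Sum>i=1..l. y i)"
    using card_permutations_of_multiset_aux[of ?A] size_A by simp
  then have "real (card (permutations_of_multiset ?A)) * (\<Prod>i=1..l. fact (y i)) = fact (\<Sum>i=1..l. y i)"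
    by (metis (mono_tags, lifting) of_nat_fact of_nat_mult of_nat_prod prod.cong)
  then show ?thesis
    unfolding compositions_with_count_list[OF y] multinomial_coeff_def
    by (simp add: field_simps)
qed

lemma reciprocal_coeff_eq_sum_partitions_tuples:
  fixes a :: "nat \<Rightarrow> real"
  shows "reciprocal_coeff a l =
    (\<Sum>y\<in>partitions_tuples l. multinomial_coeff (\<Sum>i=1..l. y i) y l *
       (-1) ^ (\<Sum>i=1..l. y i) / a 0 ^ ((\<Sum>i=1..l. y i) + 1) * (\<Prod>i=1..l. a i ^ y i))"
proof -
  define t where "t y = (-1) ^ (\<Sum>i=1..l. y i) / a 0 ^ ((\<Sum>i=1..l. y i) + 1) * (\<Prod>i=1..l. a i ^ y i)"
    for y :: "nat \<Rightarrow> nat"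
  have t: "(-1) ^ length cs / a 0 ^ (length cs + 1) * prod_list (map a cs) = t (count_list cs)"
    if "cs \<in> compositions l" for cs
    using set_compositions[OF that]
    by (simp add: t_def sum_count_set prod_list_map_eq_prod_count)
  have "reciprocal_coeff a l = (\<Sum>cs\<in>compositions l. t (count_list cs))"
    unfolding reciprocal_coeff_def by (intro sum.cong refl t)
  also have "\<dots> = (\<Sum>y\<in>partitions_tuples l. \<Sum>cs\<in>{cs \<in> compositions l. count_list cs = y}. t y)"
    by (subst sum.group[symmetric, where g = count_list])
      (auto simp: finite_compositions finite_partitions_tuples count_list_compositions)
  also have "\<dots> = (\<Sum>y\<in>partitions_tuples l. multinomial_coeff (\<Sum>i=1..l. y i) y l * t y)"
    by (intro sum.cong refl) (simp add: card_compositions_with_count_list)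
  finally show ?thesis
    by (simp add: t_def mult.assoc)
qed

lemma higher_deriv_reciprocal:
  fixes v :: "real \<Rightarrow> real"
  assumes T: "open T" and nz: "\<And>z. z \<in> T \<Longrightarrow> v z \<noteq> 0" and v: "higher_differentiable_on n v T"
    and x: "x \<in> T" and "l \<le> n"
  shows "(deriv ^^ l) (\<lambda>t. 1 / v t) x / fact l = reciprocal_coeff (\<lambda>i. (deriv ^^ i) v x / fact i) l"
proof (rule reciprocal_coeff_unique)
  show "(deriv ^^ 0) v x / fact 0 \<noteq> 0"
    using nz[OF x] by simp
  have w: "higher_differentiable_on n (\<lambda>t. 1 / v t) T"
    using higher_differentiable_on_reciprocal[OF T nz v] .
  fix j assume "j \<le> l"
  then have "(\<Sum>i=0..j. (deriv ^^ i) v x / fact i * ((deriv ^^ (j - i)) (\<lambda>t. 1 / v t) x / fact (j - i))) =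
      (deriv ^^ j) (\<lambda>t. v t * (1 / v t)) x / fact j"
    using higher_deriv_mult_real_fact[OF T v w _ x] \<open>l \<le> n\<close> by simp
  also have "(deriv ^^ j) (\<lambda>t. v t * (1 / v t)) x = (deriv ^^ j) (\<lambda>_. 1) x"
    using nz by (intro higher_deriv_cong_open[OF T _ x]) simp
  finally show "(\<Sum>i=0..j. (deriv ^^ i) v x / fact i * ((deriv ^^ (j - i)) (\<lambda>t. 1 / v t) x / fact (j - i))) =
      (if j = 0 then 1 else 0)"
    by simp
qed

lemma higher_deriv_quotient:
  fixes u v :: "real \<Rightarrow> real"
  assumes T: "open T" and nz: "\<And>z. z \<in> T \<Longrightarrow> v z \<noteq> 0"
    and u: "higher_differentiable_on n u T" and v: "higher_differentiable_on n v T" and x: "x \<in> T"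
  shows "(deriv ^^ n) (\<lambda>t. u t / v t) x = fact n * (\<Sum>l=0..n. (deriv ^^ (n - l)) u x / fact (n - l) *
    reciprocal_coeff (\<lambda>i. (deriv ^^ i) v x / fact i) l)"
proof -
  have w: "higher_differentiable_on n (\<lambda>t. 1 / v t) T"
    using higher_differentiable_on_reciprocal[OF T nz v] .
  have "(deriv ^^ n) (\<lambda>t. u t / v t) x / fact n = (deriv ^^ n) (\<lambda>t. 1 / v t * u t) x / fact n"
    by simp
  also have "\<dots> = (\<Sum>l=0..n. (deriv ^^ l) (\<lambda>t. 1 / v t) x / fact l * ((deriv ^^ (n - l)) u x / fact (n - l)))"
    by (rule higher_deriv_mult_real_fact[OF T w u order.refl x])
  also have "\<dots> = (\<Sum>l=0..n. (deriv ^^ (n - l)) u x / fact (n - l) *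
      reciprocal_coeff (\<lambda>i. (deriv ^^ i) v x / fact i) l)"
    by (intro sum.cong refl) (simp add: higher_deriv_reciprocal[OF T nz v x])
  finally show ?thesis
    by (simp add: field_simps)
qed

theorem theorem3p1:
  fixes u v :: "real \<Rightarrow> real" and n :: nat and S :: "real set" and x :: real
  assumes "open S"
    and "\<And>k y. k < n \<Longrightarrow> y \<in> S \<Longrightarrow> (deriv ^^ k) u differentiable (at y)"
    and "\<And>k y. k < n \<Longrightarrow> y \<in> S \<Longrightarrow> (deriv ^^ k) v differentiable (at y)"
    and "x \<in> S" and "v x \<noteq> 0"
  shows "(deriv ^^ n) (\<lambda>t. u t / v t) x =
    fact n * (\<Sum>l=0..n. (deriv ^^ (n - l)) u x / fact (n - l) *
      (\<Sum>y\<in>partitions_tuples l.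
         multinomial_coeff (\<Sum>i=1..l. y i) y l *
         (-1) ^ (\<Sum>i=1..l. y i) / v x ^ ((\<Sum>i=1..l. y i) + 1) *
         (\<Prod>i=1..l. ((deriv ^^ i) v x / fact i) ^ y i)))"
proof (cases n)
  case 0
  have "reciprocal_coeff (\<lambda>i. (deriv ^^ i) v x / fact i) 0 = 1 / v x"
    by (simp add: reciprocal_coeff_def compositions_0)
  then show ?thesis
    using 0 reciprocal_coeff_eq_sum_partitions_tuples[of "\<lambda>i. (deriv ^^ i) v x / fact i" 0] by simp
next
  case Suc
  define T where "T = S \<inter> v -` (-{0})"
  have "continuous_on S v"
    using assms(3)[of 0] Suc
    by (intro continuous_at_imp_continuous_on ballI differentiable_imp_continuous_within) auto
  then have T: "open T" "x \<in> T"
    using assms(1,4,5) by (auto simp: T_def open_Compl intro!: continuous_open_preimage)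
  have "higher_differentiable_on n u T" "higher_differentiable_on n v T"
    using assms(2,3) by (auto simp: higher_differentiable_on_def T_def)
  from higher_deriv_quotient[OF T(1) _ this T(2)] show ?thesis
    by (simp add: T_def reciprocal_coeff_eq_sum_partitions_tuples)
qed

end
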